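(* With $\mathbb{K}$, $I$, $\mathcal G=(g_0,\dots,g_s)$, $n_i=\deg_y(g_i)$ and $A_0,A_1,\dots$ as in the context, for every integer $n\ge n_s$ the $\mathbb{K}[x]$-module $I_{\le(.,n)}=\{f\in I:\deg_y(f)\le n\}$ is free of rank $n-n_s+1$, with basis $A_{n_s},A_{n_s+1},\dots,A_n$.
   Context: Let $\mathbb{K}$ be a field and $I\subseteq\mathbb{K}[x,y]$ an ideal. Let $\mathcal G=(g_0,\dots,g_s)$ be the reduced minimal Gröbner basis of $I$ for the lexicographic order with $x\prec y$, listed in decreasing order, and $n_i=\deg_y(g_i)$ (so $n_0> n_1>\cdots> n_s$). Define polynomials $A_0,A_1,\dots$ recursively: for $0\le i<n_s$, $A_i=0$; if there is $k\in\{0,\dots,s\}$ with $n_k=i$, then $A_i=g_k$; otherwise ($i>n_s$ and $i\notin\{n_0,\dots,n_s\}$), $A_i$ is obtained from $yA_{i-1}$ by keeping its part of $y$-degree $\ge i$ unchanged and replacing its part of $y$-degree $<i$ by the normal form of that part modulo $\mathcal G$. For a subset $S\subseteq\mathbb{K}[x,y]$, $S_{\le(.,n)}$ denotes the elements of $S$ of $y$-degree at most $n$. *)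

theory Defs
  imports "HOL-Computational_Algebra.Polynomial"
begin

text \<open>Bivariate polynomials K[x,y] are represented as 'a poly poly: polynomials in y
  whose coefficients are polynomials in x. The monomial x^i y^j is the pair (i,j).\<close>

type_synonym 'a bipoly = "'a poly poly"

definition monomials :: "'a::zero bipoly \<Rightarrow> (nat \<times> nat) set" where
  "monomials f = {(i,j). coeff (coeff f j) i \<noteq> 0}"

text \<open>Leading monomial for lex order with x < y: y-degree first, then x-degree.\<close>
definition lm :: "'a::zero bipoly \<Rightarrow> nat \<times> nat" where
  "lm f = (degree (lead_coeff f), degree f)"

definition lex_less :: "nat \<times> nat \<Rightarrow> nat \<times> nat \<Rightarrow> bool" where
  "lex_less m m' \<longleftrightarrow> snd m < snd m' \<or> (snd m = snd m' \<and> fst m < fst m')"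

definition mdvd :: "nat \<times> nat \<Rightarrow> nat \<times> nat \<Rightarrow> bool" where
  "mdvd m m' \<longleftrightarrow> fst m \<le> fst m' \<and> snd m \<le> snd m'"

definition is_ideal :: "'a::comm_ring_1 bipoly set \<Rightarrow> bool" where
  "is_ideal I \<longleftrightarrow> 0 \<in> I \<and> (\<forall>p\<in>I. \<forall>q\<in>I. p + q \<in> I) \<and> (\<forall>p\<in>I. \<forall>q. q * p \<in> I)"

definition gen_ideal :: "'a::comm_ring_1 bipoly set \<Rightarrow> 'a bipoly set" where
  "gen_ideal G = {(\<Sum>g\<in>G. c g * g) | c. True}"

definition is_groebner_basis :: "'a::comm_ring_1 bipoly set \<Rightarrow> 'a bipoly set \<Rightarrow> bool" where
  "is_groebner_basis G I \<longleftrightarrow> finite G \<and> G \<subseteq> I \<and> 0 \<notin> G \<and>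
     (\<forall>f\<in>I. f \<noteq> 0 \<longrightarrow> (\<exists>g\<in>G. mdvd (lm g) (lm f)))"

definition is_reduced_groebner_basis :: "'a::comm_ring_1 bipoly set \<Rightarrow> 'a bipoly set \<Rightarrow> bool" where
  "is_reduced_groebner_basis G I \<longleftrightarrow> is_groebner_basis G I \<and>
     (\<forall>g\<in>G. lead_coeff (lead_coeff g) = 1) \<and>
     (\<forall>g\<in>G. \<forall>g'\<in>G. g' \<noteq> g \<longrightarrow> (\<forall>m\<in>monomials g. \<not> mdvd (lm g') m))"

text \<open>Normal form modulo G: the unique r with f - r in the ideal generated by G and no
  monomial of r divisible by a leading monomial of G (well defined when G is a Groebner basis).\<close>
definition normal_form :: "'a::comm_ring_1 bipoly set \<Rightarrow> 'a bipoly \<Rightarrow> 'a bipoly" where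
  "normal_form G f = (THE r. f - r \<in> gen_ideal G \<and>
      (\<forall>m\<in>monomials r. \<forall>g\<in>G. \<not> mdvd (lm g) m))"

definition low_part :: "'a::comm_monoid_add bipoly \<Rightarrow> nat \<Rightarrow> 'a bipoly" where
  "low_part p i = (\<Sum>j<i. monom (coeff p j) j)"

text \<open>The sequence A_i, for the Groebner basis listed as gs = [g_0,...,g_s]
  (n_s = degree (last gs)).\<close>
primrec Aseq :: "'a::comm_ring_1 bipoly list \<Rightarrow> nat \<Rightarrow> 'a bipoly" where
  "Aseq gs 0 = (if 0 < degree (last gs) then 0
      else if (\<exists>g\<in>set gs. degree g = 0) then (THE g. g \<in> set gs \<and> degree g = 0) else 0)"
| "Aseq gs (Suc i) = (if Suc i < degree (last gs) then 0
      else if (\<exists>g\<in>set gs. degree g = Suc i) then (THE g. g \<in> set gs \<and> degree g = Suc i)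
      else (let p = monom 1 1 * Aseq gs i
            in (p - low_part p (Suc i)) + normal_form (set gs) (low_part p (Suc i))))"

end

theory Submission
  imports Defs
begin

text \<open>
  For i \<ge> n_s the polynomial A_i lies in I, has y-degree exactly i, and its leading coefficient
  in K[x] is that of the generator g_k of largest y-degree n_k \<le> i: multiplication by y shifts
  the top coefficient of A_{i-1} up, and the normal form only replaces terms of y-degree < i.
  Because G is reduced, this coefficient divides the leading coefficient of every element of I of
  y-degree i. Hence A_{n_s}, ..., A_n is a triangular family: cancelling top coefficients one
  y-degree at a time writes every f \<in> I with deg_y f \<le> n as a K[x]-combination of them, and the
  distinct y-degrees make the combination unique.
\<close>

section \<open>Triangular families of polynomials\<close>

lemma triangular_sum_smult_eq_0_imp_coeffs_0:
  fixes B :: "nat \<Rightarrow> 'a::idom poly"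
  assumes "finite S" "\<forall>i\<in>S. B i \<noteq> 0 \<and> degree (B i) = i" "(\<Sum>i\<in>S. smult (c i) (B i)) = 0"
  shows "\<forall>i\<in>S. c i = 0"
  using assms
proof (induction S rule: finite_linorder_max_induct)
  case (insert b S)
  have "b \<notin> S" using insert.hyps(2) by blast
  have "coeff (smult (c i) (B i)) b = 0" if "i \<in> S" for i
    using insert.hyps(2) insert.prems(1) that by (simp add: coeff_eq_0)
  then have "coeff (\<Sum>i\<in>S. smult (c i) (B i)) b = 0"
    unfolding coeff_sum by (intro sum.neutral) blast
  have "0 = coeff (\<Sum>i\<in>insert b S. smult (c i) (B i)) b" using insert.prems(2) by simp
  also have "\<dots> = c b * lead_coeff (B b)"
    using insert.hyps(1) insert.prems(1) \<open>b \<notin> S\<close> \<open>coeff (\<Sum>i\<in>S. smult (c i) (B i)) b = 0\<close>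
    by simp
  finally have "c b * lead_coeff (B b) = 0" ..
  moreover have "lead_coeff (B b) \<noteq> 0" using insert.prems(1) leading_coeff_neq_0 by blast
  ultimately have "c b = 0" by simp
  then show ?case using insert \<open>b \<notin> S\<close> by simp
qed simp

lemma triangular_sum_smult_spans:
  fixes M :: "'a::comm_ring_1 poly set" and B :: "nat \<Rightarrow> 'a poly"
  assumes diff: "\<And>f g. f \<in> M \<Longrightarrow> g \<in> M \<Longrightarrow> f - g \<in> M"
    and smult: "\<And>c f. f \<in> M \<Longrightarrow> smult c f \<in> M"
    and B: "\<And>i. i \<in> {m..n} \<Longrightarrow> B i \<in> M \<and> degree (B i) = i"
    and low: "\<And>f. f \<in> M \<Longrightarrow> f \<noteq> 0 \<Longrightarrow> m \<le> degree f"
    and dvd: "\<And>f. f \<in> M \<Longrightarrow> f \<noteq> 0 \<Longrightarrow> degree f \<le> n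
      \<Longrightarrow> lead_coeff (B (degree f)) dvd lead_coeff f"
    and f: "f \<in> M" "degree f \<le> n"
  shows "\<exists>c. f = (\<Sum>i=m..n. smult (c i) (B i))"
  using f
proof (induction "degree f" arbitrary: f rule: less_induct)
  case less
  show ?case
  proof (cases "f = 0")
    case True
    then show ?thesis by (intro exI[of _ "\<lambda>_. 0"]) simp
  next
    case False
    define d where "d = degree f"
    have d: "d \<in> {m..n}" using low[OF less.prems(1) False] less.prems(2) unfolding d_def by simp
    obtain q where q: "lead_coeff f = lead_coeff (B d) * q"
      using dvd[OF less.prems(1) False less.prems(2)] unfolding d_def by blast
    define f' where "f' = f - smult q (B d)"
    have "f' \<in> M" unfolding f'_def using less.prems(1) B[OF d] by (blast intro: diff smult)
    have "degree f' \<le> d" unfolding f'_def using B[OF d] d_def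
      by (intro degree_diff_le) (auto intro: order.trans[OF degree_smult_le])
    moreover have "coeff f' d = 0" unfolding f'_def using q B[OF d] d_def by (simp add: mult.commute)
    ultimately have "f' = 0 \<or> degree f' < d" by (metis le_neq_implies_less leading_coeff_0_iff)
    have "\<exists>c. f' = (\<Sum>i=m..n. smult (c i) (B i))"
    proof (cases "f' = 0")
      case True
      then show ?thesis by (intro exI[of _ "\<lambda>_. 0"]) simp
    next
      case False
      then have "degree f' < degree f" using \<open>f' = 0 \<or> degree f' < d\<close> d_def by simp
      then show ?thesis using less.hyps \<open>f' \<in> M\<close> less.prems(2) by simp
    qed
    then obtain c where c: "f' = (\<Sum>i=m..n. smult (c i) (B i))" by blast
    have "f = f' + smult q (B d)" unfolding f'_def by simp
    also have "\<dots> = (\<Sum>i=m..n. smult (c i + (if i = d then q else 0)) (B i))"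
      using d unfolding c
      by (simp add: smult_add_left sum.distrib if_distrib[of "\<lambda>x. smult x _"] cong: if_cong)
    finally show ?thesis by (rule exI[of _ "\<lambda>i. c i + (if i = d then q else 0)"])
  qed
qed

lemma ideal_add: "is_ideal I \<Longrightarrow> p \<in> I \<Longrightarrow> q \<in> I \<Longrightarrow> p + q \<in> I"
  unfolding is_ideal_def by blast

lemma ideal_mult: "is_ideal I \<Longrightarrow> p \<in> I \<Longrightarrow> q * p \<in> I"
  unfolding is_ideal_def by blast

lemma ideal_diff:
  assumes "is_ideal I" "p \<in> I" "q \<in> I"
  shows "p - q \<in> I"
  using ideal_add[OF assms(1,2) ideal_mult[OF assms(1,3), of "-1"]] by simp

lemma ideal_smult: "is_ideal I \<Longrightarrow> p \<in> I \<Longrightarrow> smult c p \<in> I"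
  using ideal_mult[of I p "[:c:]"] by simp

lemma ideal_sum: "is_ideal I \<Longrightarrow> (\<And>x. x \<in> S \<Longrightarrow> h x \<in> I) \<Longrightarrow> sum h S \<in> I"
  by (induction S rule: infinite_finite_induct) (auto simp: is_ideal_def)

lemma gen_ideal_eqI: "p = (\<Sum>g\<in>G. c g * g) \<Longrightarrow> p \<in> gen_ideal G"
  unfolding gen_ideal_def by blast

lemma is_ideal_gen_ideal: "is_ideal (gen_ideal G)"
  unfolding is_ideal_def
proof (intro conjI ballI allI)
  show "0 \<in> gen_ideal G" by (rule gen_ideal_eqI[of _ "\<lambda>_. 0"]) simp
next
  fix p q assume "p \<in> gen_ideal G" "q \<in> gen_ideal G"
  then obtain c d where "p = (\<Sum>g\<in>G. c g * g)" "q = (\<Sum>g\<in>G. d g * g)"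
    unfolding gen_ideal_def by blast
  then have "p + q = (\<Sum>g\<in>G. (c g + d g) * g)"
    by (simp add: sum.distrib distrib_right)
  then show "p + q \<in> gen_ideal G" by (rule gen_ideal_eqI)
next
  fix p q assume "p \<in> gen_ideal G"
  then obtain c where "p = (\<Sum>g\<in>G. c g * g)" unfolding gen_ideal_def by blast
  then have "q * p = (\<Sum>g\<in>G. (q * c g) * g)"
    by (simp add: sum_distrib_left mult.assoc)
  then show "q * p \<in> gen_ideal G" by (rule gen_ideal_eqI)
qed

lemma zero_in_gen_ideal [simp]: "0 \<in> gen_ideal G"
  using is_ideal_gen_ideal unfolding is_ideal_def by blast

lemma gen_ideal_generator:
  assumes "finite G" "g \<in> G"
  shows "g \<in> gen_ideal G"
proof -
  have "(\<Sum>g'\<in>G. (if g' = g then 1 else 0) * g') = (\<Sum>g'\<in>G. if g' = g then g' else 0)"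
    by (rule sum.cong) auto
  also have "\<dots> = g" using assms by simp
  finally show ?thesis by (rule gen_ideal_eqI[OF sym])
qed

lemma gen_ideal_subset:
  assumes "is_ideal I" "G \<subseteq> I"
  shows "gen_ideal G \<subseteq> I"
proof
  fix p assume "p \<in> gen_ideal G"
  then obtain c where "p = (\<Sum>g\<in>G. c g * g)" unfolding gen_ideal_def by blast
  moreover have "(\<Sum>g\<in>G. c g * g) \<in> I"
    using assms by (intro ideal_sum) (auto intro: ideal_mult)
  ultimately show "p \<in> I" by simp
qed

section \<open>Leading monomials and normal forms\<close>

lemma lm_in_monomials: "(f::'a::zero bipoly) \<noteq> 0 \<Longrightarrow> lm f \<in> monomials f"
  unfolding lm_def monomials_def by simp

lemma monomials_add: "monomials ((p::'a::comm_monoid_add bipoly) + q) \<subseteq> monomials p \<union> monomials q"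
  unfolding monomials_def by auto

lemma monomials_diff: "monomials ((p::'a::ab_group_add bipoly) - q) \<subseteq> monomials p \<union> monomials q"
  unfolding monomials_def by auto

lemma monomials_monom_monom: "monomials (monom (monom (c::'a::zero) i) j) \<subseteq> {(i, j)}"
  unfolding monomials_def by (auto split: if_splits)

lemma monomial_le_lm:
  assumes "m \<in> monomials (f::'a::zero bipoly)"
  shows "m = lm f \<or> lex_less m (lm f)"
proof -
  obtain i j where m: "m = (i, j)" and nz: "coeff (coeff f j) i \<noteq> 0"
    using assms unfolding monomials_def by blast
  then have j: "j \<le> degree f" by (metis coeff_0 le_degree)
  show ?thesis
  proof (cases "j = degree f")
    case True
    then have "i \<le> degree (lead_coeff f)" using nz by (simp add: le_degree)
    then show ?thesis using m True unfolding lm_def lex_less_def by auto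
  qed (use m j in \<open>auto simp: lm_def lex_less_def\<close>)
qed

lemma degree_le_if_lex_less_lm: "lex_less (lm p) (lm q) \<Longrightarrow> degree p \<le> degree q"
  unfolding lex_less_def lm_def by auto

lemma wf_lex_less_lm: "wf {(p, q). lex_less (lm p) (lm (q::'a::zero bipoly))}"
proof (rule wf_subset)
  show "wf (inv_image (less_than <*lex*> less_than) (\<lambda>f. (snd (lm f), fst (lm f))))"
    by (intro wf_inv_image wf_lex_prod wf_less_than)
qed (auto simp: lex_less_def)

lemma lex_less_lm_diff:
  fixes p q :: "'a::ab_group_add bipoly"
  assumes lm: "lm p = lm q" and lc: "lead_coeff (lead_coeff p) = lead_coeff (lead_coeff q)"
    and nz: "p - q \<noteq> 0"
  shows "lex_less (lm (p - q)) (lm p)"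
proof -
  have "lm (p - q) \<in> monomials p \<union> monomials q"
    using lm_in_monomials[OF nz] monomials_diff by blast
  then have "lm (p - q) = lm p \<or> lex_less (lm (p - q)) (lm p)"
    using monomial_le_lm[of "lm (p - q)" p] monomial_le_lm[of "lm (p - q)" q] lm by auto
  moreover have "lm (p - q) \<noteq> lm p"
  proof
    assume eq: "lm (p - q) = lm p"
    have "degree q = degree p" "degree (lead_coeff q) = degree (lead_coeff p)"
      using lm unfolding lm_def by auto
    then have "coeff (coeff (p - q) (degree p)) (degree (lead_coeff p)) = 0"
      using lc by simp
    moreover have "lm p \<in> monomials (p - q)" using lm_in_monomials[OF nz] eq by simp
    ultimately show False unfolding monomials_def lm_def by simp
  qed
  ultimately show ?thesis by blast
qed

lemma lm_mult:
  fixes h g :: "'a::idom bipoly"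
  assumes "h \<noteq> 0" "g \<noteq> 0"
  shows "lm (h * g) = (fst (lm h) + fst (lm g), snd (lm h) + snd (lm g))"
    and "lead_coeff (lead_coeff (h * g)) = lead_coeff (lead_coeff h) * lead_coeff (lead_coeff g)"
proof -
  have lc: "lead_coeff (h * g) = lead_coeff h * lead_coeff g" by (rule lead_coeff_mult)
  have "lead_coeff h \<noteq> 0" "lead_coeff g \<noteq> 0" using assms by simp_all
  then show "lm (h * g) = (fst (lm h) + fst (lm g), snd (lm h) + snd (lm g))"
    using assms unfolding lm_def lc by (simp add: degree_mult_eq)
  show "lead_coeff (lead_coeff (h * g)) = lead_coeff (lead_coeff h) * lead_coeff (lead_coeff g)"
    unfolding lc by (rule lead_coeff_mult)
qed

lemma exists_monomial_multiple_with_lm: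
  fixes f g :: "'a::field bipoly"
  assumes "f \<noteq> 0" "g \<noteq> 0" "mdvd (lm g) (lm f)"
  shows "\<exists>h. lm (h * g) = lm f
    \<and> lead_coeff (lead_coeff (h * g)) = lead_coeff (lead_coeff f)"
proof -
  define c where "c = lead_coeff (lead_coeff f) / lead_coeff (lead_coeff g)"
  define h where "h = monom (monom c (fst (lm f) - fst (lm g))) (snd (lm f) - snd (lm g))"
  have "c \<noteq> 0" using assms(1,2) unfolding c_def by simp
  then have "h \<noteq> 0" and "lm h = (fst (lm f) - fst (lm g), snd (lm f) - snd (lm g))"
    and "lead_coeff (lead_coeff h) = c"
    unfolding h_def lm_def by (simp_all add: degree_monom_eq)
  then show ?thesis
    using assms lm_mult[of h g] unfolding c_def mdvd_def by (auto simp: prod_eq_iff)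
qed

definition reduced_wrt :: "'a::zero bipoly set \<Rightarrow> 'a bipoly \<Rightarrow> bool" where
  "reduced_wrt G r \<longleftrightarrow> (\<forall>m\<in>monomials r. \<forall>g\<in>G. \<not> mdvd (lm g) m)"

lemma reduced_wrt_0 [simp]: "reduced_wrt G 0"
  unfolding reduced_wrt_def monomials_def by simp

lemma reduced_wrt_add:
  "reduced_wrt G p \<Longrightarrow> reduced_wrt G q \<Longrightarrow> reduced_wrt G ((p::'a::comm_monoid_add bipoly) + q)"
  using monomials_add unfolding reduced_wrt_def by blast

lemma leading_term_reduction:
  fixes G :: "'a::field bipoly set"
  assumes fin: "finite G" and nz: "0 \<notin> G" and f: "f \<noteq> 0"
  obtains t where "t \<in> gen_ideal G \<or> reduced_wrt G t" and "degree t \<le> degree f"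
    and "f - t = 0 \<or> lex_less (lm (f - t)) (lm f)"
proof (cases "\<exists>g\<in>G. mdvd (lm g) (lm f)")
  case True
  then obtain g where g: "g \<in> G" "mdvd (lm g) (lm f)" by blast
  moreover have "g \<noteq> 0" using g(1) nz by blast
  ultimately obtain h where h: "lm (h * g) = lm f"
    "lead_coeff (lead_coeff (h * g)) = lead_coeff (lead_coeff f)"
    using exists_monomial_multiple_with_lm[OF f] by blast
  show ?thesis
  proof (rule that)
    show "h * g \<in> gen_ideal G \<or> reduced_wrt G (h * g)"
      using ideal_mult[OF is_ideal_gen_ideal gen_ideal_generator[OF fin g(1)]] by blast
    show "degree (h * g) \<le> degree f" using h(1) unfolding lm_def by simp
    show "f - h * g = 0 \<or> lex_less (lm (f - h * g)) (lm f)"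
      using lex_less_lm_diff[of f "h * g"] h by auto
  qed
next
  case False
  define t where "t = monom (monom (lead_coeff (lead_coeff f)) (fst (lm f))) (snd (lm f))"
  have t: "lm t = lm f" "lead_coeff (lead_coeff t) = lead_coeff (lead_coeff f)"
    "degree t = degree f" "monomials t \<subseteq> {lm f}"
    using f monomials_monom_monom unfolding t_def lm_def by (simp_all add: degree_monom_eq)
  show ?thesis
  proof (rule that)
    show "t \<in> gen_ideal G \<or> reduced_wrt G t"
      using t(4) False unfolding reduced_wrt_def by blast
    show "f - t = 0 \<or> lex_less (lm (f - t)) (lm f)"
      using lex_less_lm_diff[of f t] t by auto
  qed (use t(3) in simp)
qed

lemma exists_reduced_remainder:
  fixes G :: "'a::field bipoly set"
  assumes fin: "finite G" and nz: "0 \<notin> G"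
  shows "\<exists>r. f - r \<in> gen_ideal G \<and> reduced_wrt G r \<and> degree r \<le> degree f"
proof (induction f rule: wf_induct[OF wf_lex_less_lm])
  case (1 f)
  show ?case
  proof (cases "f = 0")
    case True
    then show ?thesis
      by (intro exI[of _ 0]) simp
  next
    case False
    then obtain t where t: "t \<in> gen_ideal G \<or> reduced_wrt G t" "degree t \<le> degree f"
      "f - t = 0 \<or> lex_less (lm (f - t)) (lm f)"
      using leading_term_reduction[OF fin nz] by blast
    have "\<exists>r. f - t - r \<in> gen_ideal G \<and> reduced_wrt G r \<and> degree r \<le> degree f"
      using t(3)
    proof
      assume "f - t = 0"
      then show ?thesis
        by (intro exI[of _ 0]) simp
    next
      assume lt: "lex_less (lm (f - t)) (lm f)"
      then show ?thesis using 1 degree_le_if_lex_less_lm[OF lt] by (blast intro: order.trans)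
    qed
    then obtain r where r: "f - t - r \<in> gen_ideal G" "reduced_wrt G r" "degree r \<le> degree f"
      by blast
    show ?thesis
      using t(1)
    proof
      assume "t \<in> gen_ideal G"
      have "f - r = (f - t - r) + t" by simp
      also have "\<dots> \<in> gen_ideal G"
        using ideal_add[OF is_ideal_gen_ideal r(1) \<open>t \<in> gen_ideal G\<close>] .
      finally show ?thesis using r(2,3) by blast
    next
      assume "reduced_wrt G t"
      then show ?thesis
        using r t(2) reduced_wrt_add[of G t r] degree_add_le[of t "degree f" r]
        by (intro exI[of _ "t + r"]) (simp add: diff_diff_eq)
    qed
  qed
qed

lemma normal_form_eqI:
  fixes G :: "'a::field bipoly set"
  assumes I: "is_ideal I" and GB: "is_groebner_basis G I"
    and r: "f - r \<in> gen_ideal G" "reduced_wrt G r"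
  shows "normal_form G f = r"
  unfolding normal_form_def reduced_wrt_def[symmetric]
proof (rule the_equality)
  show "f - r \<in> gen_ideal G \<and> reduced_wrt G r" using r by blast
next
  fix r' assume r': "f - r' \<in> gen_ideal G \<and> reduced_wrt G r'"
  show "r' = r"
  proof (rule ccontr)
    assume "r' \<noteq> r"
    then have nz: "r - r' \<noteq> 0" by simp
    have "r - r' = (f - r') - (f - r)" by simp
    also have "\<dots> \<in> I"
      using r(1) r' gen_ideal_subset[OF I] GB unfolding is_groebner_basis_def
      by (blast intro: ideal_diff[OF I])
    finally obtain g where g: "g \<in> G" "mdvd (lm g) (lm (r - r'))"
      using GB nz unfolding is_groebner_basis_def by blast
    have "lm (r - r') \<in> monomials r \<union> monomials r'"
      using lm_in_monomials[OF nz] monomials_diff by blast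
    then show False using g r(2) r' unfolding reduced_wrt_def by blast
  qed
qed

lemma
  fixes G :: "'a::field bipoly set"
  assumes I: "is_ideal I" and GB: "is_groebner_basis G I"
  shows diff_normal_form_in_gen_ideal: "f - normal_form G f \<in> gen_ideal G"
    and degree_normal_form_le: "degree (normal_form G f) \<le> degree f"
proof -
  obtain r where r: "f - r \<in> gen_ideal G" "reduced_wrt G r" "degree r \<le> degree f"
    using exists_reduced_remainder GB unfolding is_groebner_basis_def by blast
  then show "f - normal_form G f \<in> gen_ideal G" and "degree (normal_form G f) \<le> degree f"
    using normal_form_eqI[OF I GB r(1,2)] by simp_all
qed

section \<open>Reduced Groebner bases\<close>

lemma sorted_lm_last_degree_le:
  assumes "sorted_wrt (\<lambda>g h. lex_less (lm h) (lm g)) gs" "g \<in> set gs"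
  shows "degree (last gs) \<le> degree g"
proof -
  obtain k where k: "k < length gs" "gs ! k = g" using assms(2) by (meson in_set_conv_nth)
  have "gs \<noteq> []" using assms(2) by auto
  then have last: "last gs = gs ! (length gs - 1)" by (rule last_conv_nth)
  show ?thesis
  proof (cases "k = length gs - 1")
    case False
    then have "lex_less (lm (last gs)) (lm g)"
      using assms(1) k last unfolding sorted_wrt_iff_nth_less by auto
    then show ?thesis by (rule degree_le_if_lex_less_lm)
  qed (use k last in simp)
qed

lemma sorted_groebner_basis_last_degree_le:
  assumes "is_groebner_basis (set gs) I" "sorted_wrt (\<lambda>g h. lex_less (lm h) (lm g)) gs"
    and "f \<in> I" "f \<noteq> 0"
  shows "degree (last gs) \<le> degree f"
proof -
  obtain g where "g \<in> set gs" "degree g \<le> degree f"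
    using assms(1,3,4) unfolding is_groebner_basis_def mdvd_def lm_def by auto
  then show ?thesis using sorted_lm_last_degree_le[OF assms(2)] le_trans by blast
qed

lemma reduced_groebner_basis_not_mdvd:
  assumes "is_reduced_groebner_basis G I" "g \<in> G" "g' \<in> G" "g' \<noteq> g"
  shows "\<not> mdvd (lm g') (lm g)"
proof -
  have "g \<noteq> 0" using assms(1,2) unfolding is_reduced_groebner_basis_def is_groebner_basis_def
    by blast
  then show ?thesis
    using assms lm_in_monomials unfolding is_reduced_groebner_basis_def by blast
qed

lemma reduced_groebner_basis_degree_inj:
  assumes "is_reduced_groebner_basis G I" "g \<in> G" "g' \<in> G" "degree g = degree g'"
  shows "g = g'"
proof (rule ccontr)
  assume "g \<noteq> g'"
  moreover have "mdvd (lm g) (lm g') \<or> mdvd (lm g') (lm g)"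
    using assms(4) unfolding mdvd_def lm_def by auto
  ultimately show False using reduced_groebner_basis_not_mdvd assms(1-3) by metis
qed

definition highest_below :: "'a::zero poly set \<Rightarrow> nat \<Rightarrow> 'a poly \<Rightarrow> bool" where
  "highest_below G i g \<longleftrightarrow> g \<in> G \<and> degree g \<le> i \<and> (\<forall>g'\<in>G. degree g' \<le> i \<longrightarrow> degree g' \<le> degree g)"

lemma lead_coeff_mod_reduction:
  fixes f g :: "'a::idom_modulo poly"
  assumes "degree g \<le> degree f"
  defines "f' \<equiv> f - monom (lead_coeff f div lead_coeff g) (degree f - degree g) * g"
  shows "degree f' \<le> degree f" and "coeff f' (degree f) = lead_coeff f mod lead_coeff g"
proof -
  let ?h = "monom (lead_coeff f div lead_coeff g) (degree f - degree g)"
  have "degree (?h * g) \<le> degree f"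
    using degree_mult_le[of ?h g]
      degree_monom_le[of "lead_coeff f div lead_coeff g" "degree f - degree g"] assms(1)
    by linarith
  then show "degree f' \<le> degree f" unfolding f'_def by (intro degree_diff_le) auto
  have "coeff (?h * g) (degree f) = lead_coeff f div lead_coeff g * lead_coeff g"
    unfolding coeff_monom_mult using assms(1) by simp
  then show "coeff f' (degree f) = lead_coeff f mod lead_coeff g"
    unfolding f'_def by (simp add: minus_div_mult_eq_mod[symmetric])
qed

text \<open>Otherwise reducing the leading coefficient of f modulo that of g0 leaves an element of I
  of the same y-degree whose leading monomial, hence also the leading monomial of g0, is divisible
  by the leading monomial of another generator.\<close>
lemma reduced_groebner_basis_lead_coeff_dvd:
  fixes I :: "'a::field bipoly set"
  assumes I: "is_ideal I" and R: "is_reduced_groebner_basis G I"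
    and "highest_below G (degree f) g0" and f: "f \<in> I" "f \<noteq> 0"
  shows "lead_coeff g0 dvd lead_coeff f"
proof -
  have g0: "g0 \<in> G" "degree g0 \<le> degree f"
    and max: "\<And>g. g \<in> G \<Longrightarrow> degree g \<le> degree f \<Longrightarrow> degree g \<le> degree g0"
    using \<open>highest_below G (degree f) g0\<close> unfolding highest_below_def by auto
  have GB: "is_groebner_basis G I" using R unfolding is_reduced_groebner_basis_def by blast
  then have "g0 \<in> I" "g0 \<noteq> 0" using g0(1) unfolding is_groebner_basis_def by auto
  define L where "L = lead_coeff g0"
  define r where "r = lead_coeff f mod L"
  define f' where "f' = f - monom (lead_coeff f div L) (degree f - degree g0) * g0"
  have L0: "L \<noteq> 0" using \<open>g0 \<noteq> 0\<close> unfolding L_def by simp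
  have f'I: "f' \<in> I" unfolding f'_def using I f(1) \<open>g0 \<in> I\<close> by (intro ideal_diff ideal_mult)
  have "degree f' \<le> degree f" and top: "coeff f' (degree f) = r"
    using lead_coeff_mod_reduction[OF g0(2)] unfolding f'_def r_def L_def by simp_all
  have "r = 0"
  proof (rule ccontr)
    assume "r \<noteq> 0"
    then have "f' \<noteq> 0" "degree f' = degree f"
      using top \<open>degree f' \<le> degree f\<close> le_degree[of f' "degree f"] by auto
    then obtain g1 where g1: "g1 \<in> G" "mdvd (lm g1) (lm f')"
      using GB f'I unfolding is_groebner_basis_def by blast
    have "degree r < degree L" using degree_mod_less'[OF L0 \<open>r \<noteq> 0\<close>[unfolded r_def]]
      unfolding r_def .
    then have "degree (lead_coeff g1) < degree (lead_coeff g0)" "degree g1 \<le> degree f"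
      using g1(2) top \<open>degree f' = degree f\<close> unfolding mdvd_def lm_def L_def by auto
    then have "mdvd (lm g1) (lm g0)" "g1 \<noteq> g0"
      using max[OF g1(1)] unfolding mdvd_def lm_def by auto
    then show False using reduced_groebner_basis_not_mdvd[OF R g0(1) g1(1)] by blast
  qed
  then show ?thesis unfolding r_def L_def by (simp add: dvd_eq_mod_eq_0)
qed

section \<open>The sequence A_i\<close>

lemma coeff_low_part: "coeff (low_part p i) k = (if k < i then coeff p k else 0)"
  unfolding low_part_def by (simp add: coeff_sum)

lemma reduce_low_part_of_shift:
  fixes G :: "'a::field bipoly set"
  assumes I: "is_ideal I" and GB: "is_groebner_basis G I"
    and A: "A \<in> I" "A \<noteq> 0" "degree A = j"
  defines "p \<equiv> monom 1 1 * A"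
  defines "B \<equiv> p - low_part p (Suc j) + normal_form G (low_part p (Suc j))"
  shows "B \<in> I" and "degree B = Suc j" and "lead_coeff B = lead_coeff A"
proof -
  define low where "low = low_part p (Suc j)"
  have B: "B = p - (low - normal_form G low)" unfolding B_def low_def by simp
  have "low - normal_form G low \<in> I"
    using diff_normal_form_in_gen_ideal[OF I GB] gen_ideal_subset[OF I] GB
    unfolding is_groebner_basis_def by blast
  moreover have "p \<in> I" unfolding p_def using I A(1) by (rule ideal_mult)
  ultimately show "B \<in> I" unfolding B using I by (blast intro: ideal_diff)
  have "degree low \<le> j" by (rule degree_le) (simp add: low_def coeff_low_part)
  then have "degree (normal_form G low) \<le> j"
    using degree_normal_form_le[OF I GB, of low] by linarith
  then have high: "coeff B k = coeff A (k - 1)" if "Suc j \<le> k" for k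
    using that \<open>degree low \<le> j\<close> unfolding B_def low_def[symmetric]
    by (simp add: low_def coeff_low_part p_def coeff_monom_mult coeff_eq_0)
  have "coeff B k = 0" if "Suc j < k" for k
    using high[of k] that A(3) by (simp add: coeff_eq_0)
  then have "degree B \<le> Suc j" by (intro degree_le) auto
  moreover have top: "coeff B (Suc j) = lead_coeff A" using high A(3) by simp
  moreover have "lead_coeff A \<noteq> 0" using A(2) by simp
  ultimately show "degree B = Suc j" by (metis antisym le_degree)
  then show "lead_coeff B = lead_coeff A" using top by simp
qed

lemma Aseq_generator:
  assumes R: "is_reduced_groebner_basis (set gs) I"
    and sorted: "sorted_wrt (\<lambda>g h. lex_less (lm h) (lm g)) gs" and g: "g \<in> set gs"
  shows "Aseq gs (degree g) = g"
proof -
  have "(THE g'. g' \<in> set gs \<and> degree g' = degree g) = g"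
    using g reduced_groebner_basis_degree_inj[OF R] by blast
  moreover have "\<not> degree g < degree (last gs)"
    using sorted_lm_last_degree_le[OF sorted g] by simp
  ultimately show ?thesis using g by (cases "degree g") auto
qed

lemma Aseq_invariant:
  fixes I :: "'a::field bipoly set"
  assumes I: "is_ideal I" and R: "is_reduced_groebner_basis (set gs) I"
    and "gs \<noteq> []" and sorted: "sorted_wrt (\<lambda>g h. lex_less (lm h) (lm g)) gs"
    and "degree (last gs) \<le> i"
  shows "Aseq gs i \<in> I \<and> degree (Aseq gs i) = i \<and>
    (\<exists>g. highest_below (set gs) i g \<and> lead_coeff (Aseq gs i) = lead_coeff g)"
proof -
  have GB: "is_groebner_basis (set gs) I" using R unfolding is_reduced_groebner_basis_def by blast
  then have gens: "set gs \<subseteq> I" "0 \<notin> set gs" unfolding is_groebner_basis_def by auto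
  have at_generator: "Aseq gs k \<in> I \<and> degree (Aseq gs k) = k \<and>
    (\<exists>g. highest_below (set gs) k g \<and> lead_coeff (Aseq gs k) = lead_coeff g)"
    if g: "g \<in> set gs" "degree g = k" for g k
  proof -
    have "Aseq gs k = g" using Aseq_generator[OF R sorted g(1)] g(2) by simp
    then show ?thesis using g gens(1) unfolding highest_below_def by (intro conjI exI[of _ g]) auto
  qed
  show ?thesis
    using \<open>degree (last gs) \<le> i\<close>
  proof (induction i)
    case 0
    moreover have "last gs \<in> set gs" using \<open>gs \<noteq> []\<close> by simp
    ultimately show ?case using at_generator by blast
  next
    case (Suc j)
    show ?case
    proof (cases "\<exists>g\<in>set gs. degree g = Suc j")
      case True
      then show ?thesis using at_generator by blast
    next
      case False
      then have "degree (last gs) \<le> j" using Suc.prems \<open>gs \<noteq> []\<close> by (auto simp: le_Suc_eq)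
      then obtain g where A: "Aseq gs j \<in> I" "degree (Aseq gs j) = j"
        and g: "highest_below (set gs) j g" "lead_coeff (Aseq gs j) = lead_coeff g"
        using Suc.IH by blast
      have "Aseq gs j \<noteq> 0"
        using g gens(2) unfolding highest_below_def by (metis leading_coeff_0_iff)
      moreover have "Aseq gs (Suc j) = monom 1 1 * Aseq gs j
          - low_part (monom 1 1 * Aseq gs j) (Suc j)
          + normal_form (set gs) (low_part (monom 1 1 * Aseq gs j) (Suc j))"
        using False Suc.prems by (simp add: Let_def)
      ultimately have "Aseq gs (Suc j) \<in> I" "degree (Aseq gs (Suc j)) = Suc j"
        "lead_coeff (Aseq gs (Suc j)) = lead_coeff g"
        using reduce_low_part_of_shift[OF I GB A(1) _ A(2)] g(2) by simp_all
      moreover have "highest_below (set gs) (Suc j) g"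
        using g(1) False unfolding highest_below_def by (auto simp: le_Suc_eq)
      ultimately show ?thesis by blast
    qed
  qed
qed

lemma Aseq_basis_element:
  fixes I :: "'a::field bipoly set"
  assumes I: "is_ideal I" and R: "is_reduced_groebner_basis (set gs) I"
    and "gs \<noteq> []" and sorted: "sorted_wrt (\<lambda>g h. lex_less (lm h) (lm g)) gs"
    and "degree (last gs) \<le> i"
  shows "Aseq gs i \<in> I" and "Aseq gs i \<noteq> 0" and "degree (Aseq gs i) = i"
    and "\<And>f. f \<in> I \<Longrightarrow> f \<noteq> 0 \<Longrightarrow> degree f = i \<Longrightarrow> lead_coeff (Aseq gs i) dvd lead_coeff f"
proof -
  obtain g where A: "Aseq gs i \<in> I" "degree (Aseq gs i) = i"
    and g: "highest_below (set gs) i g" "lead_coeff (Aseq gs i) = lead_coeff g"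
    using Aseq_invariant[OF assms] by blast
  have "g \<noteq> 0" using g(1) R
    unfolding highest_below_def is_reduced_groebner_basis_def is_groebner_basis_def by blast
  then show "Aseq gs i \<noteq> 0" using g(2) by (metis leading_coeff_0_iff)
  show "Aseq gs i \<in> I" "degree (Aseq gs i) = i" by (fact A)+
  show "lead_coeff (Aseq gs i) dvd lead_coeff f" if "f \<in> I" "f \<noteq> 0" "degree f = i" for f
    using reduced_groebner_basis_lead_coeff_dvd[OF I R _ that(1,2)] g that(3) by simp
qed

theorem lemma2:
  fixes I :: "'a::field poly poly set" and gs :: "'a poly poly list" and n :: nat
  assumes "is_ideal I"
    and "is_reduced_groebner_basis (set gs) I"
    and "gs \<noteq> []"
    and "sorted_wrt (\<lambda>g h. lex_less (lm h) (lm g)) gs"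
    and "degree (last gs) \<le> n"
  shows "(\<forall>i\<in>{degree (last gs)..n}. Aseq gs i \<in> I \<and> degree (Aseq gs i) \<le> n)
    \<and> (\<forall>f\<in>I. degree f \<le> n \<longrightarrow>
          (\<exists>c. f = (\<Sum>i=degree (last gs)..n. smult (c i) (Aseq gs i))))
    \<and> (\<forall>c. (\<Sum>i=degree (last gs)..n. smult (c i) (Aseq gs i)) = 0 \<longrightarrow>
          (\<forall>i\<in>{degree (last gs)..n}. c i = 0))
    \<and> card (Aseq gs ` {degree (last gs)..n}) = n - degree (last gs) + 1"
proof -
  note A = Aseq_basis_element[OF assms(1-4)]
  have GB: "is_groebner_basis (set gs) I"
    using assms(2) unfolding is_reduced_groebner_basis_def by blast
  note low = sorted_groebner_basis_last_degree_le[OF GB assms(4)]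
  have span: "\<exists>c. f = (\<Sum>i=degree (last gs)..n. smult (c i) (Aseq gs i))"
    if "f \<in> I" "degree f \<le> n" for f
  proof (rule triangular_sum_smult_spans[OF _ _ _ low _ that])
    show "\<And>f g. f \<in> I \<Longrightarrow> g \<in> I \<Longrightarrow> f - g \<in> I" by (rule ideal_diff[OF assms(1)])
    show "\<And>c f. f \<in> I \<Longrightarrow> smult c f \<in> I" by (rule ideal_smult[OF assms(1)])
    show "\<And>i. i \<in> {degree (last gs)..n} \<Longrightarrow> Aseq gs i \<in> I \<and> degree (Aseq gs i) = i"
      using A(1,3) by simp
    show "\<And>f. f \<in> I \<Longrightarrow> f \<noteq> 0 \<Longrightarrow> degree f \<le> n
        \<Longrightarrow> lead_coeff (Aseq gs (degree f)) dvd lead_coeff f"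
      using A(4) low by simp
  qed
  have indep: "\<forall>i\<in>{degree (last gs)..n}. c i = 0"
    if "(\<Sum>i=degree (last gs)..n. smult (c i) (Aseq gs i)) = 0" for c
    using triangular_sum_smult_eq_0_imp_coeffs_0[OF _ _ that] A(2,3) by simp
  have "inj_on (Aseq gs) {degree (last gs)..n}"
    by (rule inj_on_inverseI[of _ degree]) (simp add: A(3))
  then have "card (Aseq gs ` {degree (last gs)..n}) = n - degree (last gs) + 1"
    using assms(5) by (simp add: card_image)
  then show ?thesis using A(1,3) span indep by simp
qed

end
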